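(* There are exactly $q^3-q^2-q-1$ points $P$ (not in $\mathcal P_{2,q}$ and not on $m_T$) for which the projection of $\mathcal P_{2,q}$ from $P$ onto $m_T$ is one of the sets $\mathcal S_\theta$, namely $T$ and the points of $\mathrm{Fig}(T)$ not incident with $m_T$. These projection vertices are distributed as follows. (1) If $q$ is even: (a) there is exactly one projection vertex for $\mathcal P_{2,q}$ onto $\mathcal S_1$, namely $T$; (b) for $\theta\in\mathbb{F}_{q^3}^*$ with $N(\theta)\neq1$, there are exactly $q^2+q+1$ projection vertices for $\mathcal P_{2,q}$ onto $\mathcal S_\theta$, namely the points of $\Pi_\theta$. (2) If $q$ is odd: (a) there are no projection vertices for $\mathcal P_{2,q}$ onto $\mathcal S_{-1}$; (b) there are exactly $q^2+q+2$ projection vertices for $\mathcal P_{2,q}$ onto $\mathcal S_1$, namely $T$ and the points of $\Pi_{-1}$; (c) for $\theta\in\mathbb{F}_{q^3}^*$ with $N(\theta)\neq\pm1$, there are exactly $q^2+q+1$ projection vertices for $\mathcal P_{2,q}$ onto $\mathcal S_\theta$, namely the points of $\Pi_{-\theta}$.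
   Context: Let $q$ be a prime power, $\mathbb{F}_{q^3}^*=\mathbb{F}_{q^3}\setminus\{0\}$, $N(x)=x^{q^2+q+1}$. Points of $\mathrm{PG}(2,q^3)$ have homogeneous coordinates $(x,y,z)$ and lines $[a,b,c]$. Let $\phi$ be the collineation $(x,y,z)\mapsto(z^q,x^q,y^q)$ (on lines $[d,e,f]\mapsto[f^q,d^q,e^q]$), whose fixed points form the subplane $\mathcal P_{2,q}=\{(x,x^q,x^{q^2}):x\in\mathbb{F}_{q^3}^*\}$. A point has Type II (resp. III) if its $\phi$-orbit is three collinear (resp. non-collinear) points; a line has Type III if its $\phi$-orbit is three non-concurrent lines. For a Type III point $X$, the Fig-block is $\mathrm{Fig}(X)=\mathcal E_X\cup\mathcal F_X$, where $\mathcal E_X$ is the set of Type II points on the line $X^\phi X^{\phi^2}$ and $\mathcal F_X=\{\ell^\phi\cap\ell^{\phi^2}:\ell\text{ a Type III line through }X\}$. Let $T=(0,0,1)$ and $m_T$ the line $[0,0,1]$. For $\theta\in\mathbb{F}_{q^3}^*$, $\mathcal S_\theta=\{(x\theta,x^q,0):x\in\mathbb{F}_{q^3}^*\}$ and $\Pi_\theta=\{(r\theta^{q+1},r^q,r^{q^2}\theta):r\in\mathbb{F}_{q^3}^*\}$. For a subplane $\mathcal B$ of order $q$ and a point $P$ not in $\mathcal B$ and not on $m_T$, the projection of $\mathcal B$ from $P$ onto $m_T$ is $\{PQ\cap m_T:Q\in\mathcal B\}$; if it equals $\mathcal S_\theta$, then $P$ is called a projection vertex for $\mathcal B$ onto $\mathcal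 S_\theta$. *)

theory Defs
  imports "HOL-Computational_Algebra.Primes"
begin

text \<open>Homogeneous coordinate triples over a finite field 'a (playing the role of GF(q^3)).
  A point (or line) of PG(2,q^3) is represented as the set of all nonzero scalar multiples of
  a nonzero triple.\<close>

type_synonym 'a trip = "'a \<times> 'a \<times> 'a"

definition sc :: "'a::field \<Rightarrow> 'a trip \<Rightarrow> 'a trip" where
  "sc k v = (case v of (x, y, z) \<Rightarrow> (k * x, k * y, k * z))"

definition pt :: "'a::field trip \<Rightarrow> 'a trip set" where
  "pt v = {sc k v | k. k \<noteq> 0}"

text \<open>Points of PG(2,q^3); lines are represented by the same kind of objects
  (line [a,b,c] is pt (a,b,c)).\<close>
definition PG :: "'a::field trip set set" where
  "PG = {pt v | v. v \<noteq> (0, 0, 0)}"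

definition dot :: "'a::field trip \<Rightarrow> 'a trip \<Rightarrow> 'a" where
  "dot u v = (case u of (a, b, c) \<Rightarrow> case v of (x, y, z) \<Rightarrow> a * x + b * y + c * z)"

definition inc :: "'a::field trip set \<Rightarrow> 'a trip set \<Rightarrow> bool" where
  "inc P L = (\<exists>p\<in>P. \<exists>l\<in>L. dot l p = 0)"

definition det3 :: "'a::field trip \<Rightarrow> 'a trip \<Rightarrow> 'a trip \<Rightarrow> 'a" where
  "det3 u v w = (case u of (a, b, c) \<Rightarrow> case v of (d, e, f) \<Rightarrow> case w of (g, h, i) \<Rightarrow>
      a * (e * i - f * h) - b * (d * i - f * g) + c * (d * h - e * g))"

definition dep3 :: "'a::field trip set \<Rightarrow> 'a trip set \<Rightarrow> 'a trip set \<Rightarrow> bool" where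
  "dep3 P Q R = (\<exists>u\<in>P. \<exists>v\<in>Q. \<exists>w\<in>R. det3 u v w = 0)"

text \<open>The collineation phi: (x,y,z) -> (z^q,x^q,y^q); on lines [d,e,f] -> [f^q,d^q,e^q]
  (same formula).\<close>
definition phi :: "nat \<Rightarrow> 'a::field trip set \<Rightarrow> 'a trip set" where
  "phi q S = (\<lambda>(x, y, z). (z ^ q, x ^ q, y ^ q)) ` S"

definition normq :: "nat \<Rightarrow> 'a::field \<Rightarrow> 'a" where
  "normq q x = x ^ (q^2 + q + 1)"

definition subplane :: "nat \<Rightarrow> 'a::field trip set set" where
  "subplane q = {pt (x, x ^ q, x ^ (q^2)) | x. x \<noteq> 0}"

definition typeII_pt :: "nat \<Rightarrow> 'a::field trip set \<Rightarrow> bool" where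
  "typeII_pt q X = (X \<in> PG \<and> X \<noteq> phi q X \<and> X \<noteq> phi q (phi q X) \<and>
      phi q X \<noteq> phi q (phi q X) \<and> dep3 X (phi q X) (phi q (phi q X)))"

definition typeIII :: "nat \<Rightarrow> 'a::field trip set \<Rightarrow> bool" where
  "typeIII q X = (X \<in> PG \<and> \<not> dep3 X (phi q X) (phi q (phi q X)))"

definition E_set :: "nat \<Rightarrow> 'a::field trip set \<Rightarrow> 'a trip set set" where
  "E_set q X = {Y. typeII_pt q Y \<and> dep3 (phi q X) (phi q (phi q X)) Y}"

definition F_set :: "nat \<Rightarrow> 'a::field trip set \<Rightarrow> 'a trip set set" where
  "F_set q X = {Y \<in> PG. \<exists>l. typeIII q l \<and> inc X l \<and>
      inc Y (phi q l) \<and> inc Y (phi q (phi q l))}"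

definition Fig :: "nat \<Rightarrow> 'a::field trip set \<Rightarrow> 'a trip set set" where
  "Fig q X = E_set q X \<union> F_set q X"

definition Tpt :: "'a::field trip set" where
  "Tpt = pt (0, 0, 1)"

definition mT :: "'a::field trip set" where
  "mT = pt (0, 0, 1)"

definition S_set :: "nat \<Rightarrow> 'a::field \<Rightarrow> 'a trip set set" where
  "S_set q \<theta> = {pt (x * \<theta>, x ^ q, 0) | x. x \<noteq> 0}"

definition Pi_set :: "nat \<Rightarrow> 'a::field \<Rightarrow> 'a trip set set" where
  "Pi_set q \<theta> = {pt (r * \<theta> ^ (q + 1), r ^ q, r ^ (q^2) * \<theta>) | r. r \<noteq> 0}"

text \<open>Projection of B from P onto m_T: the points PQ \<inter> m_T for Q in B
  (for P not on m_T, R on m_T is PQ \<inter> m_T iff P, Q, R are collinear).\<close>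
definition projection :: "'a::field trip set set \<Rightarrow> 'a trip set \<Rightarrow> 'a trip set set" where
  "projection B P = {R \<in> PG. inc R mT \<and> (\<exists>Q\<in>B. dep3 P Q R)}"

definition vertices :: "nat \<Rightarrow> 'a::field \<Rightarrow> 'a trip set set" where
  "vertices q \<theta> = {P \<in> PG. P \<notin> subplane q \<and> \<not> inc P mT \<and>
      projection (subplane q) P = S_set q \<theta>}"

end

theory Submission
  imports Defs "HOL-Computational_Algebra.Polynomial"
begin

text \<open>
  Write \<open>\<sigma> x = x\<^sup>q\<close> and \<open>N x = x \<sigma>(x) \<sigma>\<^sup>2(x)\<close>. From a vertex \<open>(a, b, 1)\<close> the subplane
  point \<open>(x, \<sigma> x, \<sigma>\<^sup>2 x)\<close> projects to \<open>(x - a \<sigma>\<^sup>2 x, \<sigma> x - b \<sigma>\<^sup>2 x, 0)\<close>, and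
  \<open>(u, v, 0)\<close> lies in \<open>S\<^sub>\<theta>\<close> only if \<open>N u = N \<theta> N v\<close>. So a vertex for \<open>S\<^sub>\<theta>\<close> makes
  \<open>N (x - a \<sigma>\<^sup>2 x) - N \<theta> N (\<sigma> x - b \<sigma>\<^sup>2 x)\<close> vanish identically. This is a sum of seven
  monomials \<open>x\<^bsup>i + q j + q\<^sup>2 k\<^esup>\<close> with exponents distinct modulo \<open>q\<^sup>3 - 1\<close>, so all its
  coefficients vanish, which leaves only \<open>T\<close> (when \<open>N \<theta> = 1\<close>) and the points \<open>(1 / \<sigma> b, b, 1)\<close> with
  \<open>N b = -1 / N \<theta>\<close>. Hilbert's Theorem 90, obtained by counting the fibres of
  \<open>x \<mapsto> \<sigma> x / x\<close>, shows conversely that all these points are vertices. The same points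
  make up \<open>\<Pi>\<close> for \<open>-\<theta>\<close> and, for \<open>N b \<noteq> 1\<close>, the part of \<open>Fig(T)\<close> off \<open>m\<^sub>T\<close>. The counts
  follow because \<open>N\<close> maps the nonzero elements onto the nonzero elements fixed by \<open>\<sigma>\<close>,
  with all fibres of size \<open>q\<^sup>2 + q + 1\<close>.
\<close>

section \<open>Finite fields\<close>

lemma of_nat_card_UNIV_eq_0: "of_nat (card (UNIV :: 'a :: {ring_1,finite} set)) = (0 :: 'a)"
proof -
  have "(\<Sum>y\<in>UNIV. y + 1) = (\<Sum>y\<in>UNIV. y :: 'a)"
    by (rule sum.reindex_bij_betw) (auto simp: bij_betw_def inj_on_def image_def intro!: exI[of _ "_ - 1"])
  then show ?thesis by (simp add: sum.distrib)
qed

lemma CHAR_eq_prime_if_card_UNIV: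
  assumes "prime p" "card (UNIV :: 'a :: {field,finite} set) = p ^ n"
  shows "CHAR('a) = p"
proof -
  have "prime CHAR('a)" by (intro prime_CHAR_semidom finite_imp_CHAR_pos) simp
  moreover have "CHAR('a) dvd p ^ n"
    using of_nat_card_UNIV_eq_0[where 'a = 'a] assms(2) of_nat_eq_0_iff_char_dvd by metis
  ultimately have "CHAR('a) dvd p" by (rule prime_dvd_power)
  then show ?thesis using \<open>prime CHAR('a)\<close> assms(1) primes_dvd_imp_eq by blast
qed

lemma power_card_UNIV_minus_1:
  assumes "(x :: 'a :: {field,finite}) \<noteq> 0"
  shows "x ^ (card (UNIV :: 'a set) - 1) = 1"
proof -
  let ?U = "UNIV - {0 :: 'a}"
  have "(\<Prod>y\<in>?U. x * y) = (\<Prod>y\<in>?U. y)"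
  proof (rule prod.reindex_bij_betw)
    show "bij_betw ((*) x) ?U ?U"
      by (rule bij_betw_byWitness[where f'="\<lambda>y. y / x"]) (use assms in auto)
  qed
  then have "x ^ card ?U = 1" by (simp add: prod.distrib)
  then show ?thesis by (simp add: card_Diff_singleton)
qed

lemma power_card_UNIV_eq_self: "(x :: 'a :: {field,finite}) ^ card (UNIV :: 'a set) = x"
proof (cases "x = 0")
  case False
  have "card (UNIV :: 'a set) = Suc (card (UNIV :: 'a set) - 1)"
    using finite_UNIV_card_ge_0[where 'a = 'a] by simp
  then show ?thesis using power_card_UNIV_minus_1[OF False] by (metis power_Suc mult_1_right)
qed (simp add: card_gt_0_iff)

lemma card_roots_power_eq_le:
  assumes "n > 0"
  shows "card {x :: 'a :: field. x ^ n = c} \<le> n"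
proof -
  let ?p = "monom (1 :: 'a) n + [:-c:]"
  have deg: "degree ?p = n" using assms by (subst degree_add_eq_left) (auto simp: degree_monom_eq)
  then have "?p \<noteq> 0" using assms by auto
  then have "card {x. poly ?p x = 0} \<le> n" using card_poly_roots_bound deg by metis
  moreover have "{x. poly ?p x = 0} = {x. x ^ n = c}" by (auto simp: poly_monom)
  ultimately show ?thesis by simp
qed

lemma sum_monomials_eq_0_imp_coeff_eq_0:
  fixes c :: "nat \<Rightarrow> 'a :: {field,finite}"
  assumes vanish: "\<And>x :: 'a. (\<Sum>i<m. c i * x ^ d i) = 0"
    and inj: "inj_on d {..<m}" and small: "\<And>i. i < m \<Longrightarrow> d i < card (UNIV :: 'a set)"
    and "j < m"
  shows "c j = 0"
proof -
  let ?p = "\<Sum>i<m. monom (c i) (d i)"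
  have coeff_p: "coeff ?p n = (\<Sum>i<m. if d i = n then c i else 0)" for n
    by (simp add: coeff_sum coeff_monom)
  have "?p = 0"
  proof (rule ccontr)
    assume nz: "?p \<noteq> 0"
    have "degree ?p < card (UNIV :: 'a set)"
    proof -
      have "degree ?p \<le> card (UNIV :: 'a set) - 1"
      proof (rule degree_le, intro allI impI)
        fix n assume "card (UNIV :: 'a set) - 1 < n"
        then have "d i \<noteq> n" if "i < m" for i using small[OF that] by linarith
        then show "coeff ?p n = 0" unfolding coeff_p by (intro sum.neutral) auto
      qed
      moreover have "card (UNIV :: 'a set) > 0" by (simp add: finite_UNIV_card_ge_0)
      ultimately show ?thesis by linarith
    qed
    moreover have "{x. poly ?p x = 0} = UNIV" using vanish by (auto simp: poly_sum poly_monom)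
    ultimately show False using card_poly_roots_bound[OF nz] by simp
  qed
  then have "0 = coeff ?p (d j)" by simp
  also have "\<dots> = (\<Sum>i<m. if i = j then c i else 0)"
    unfolding coeff_p using inj \<open>j < m\<close> by (intro sum.cong) (auto dest: inj_onD)
  finally show ?thesis using \<open>j < m\<close> by simp
qed

text \<open>Exponents only matter modulo \<open>card UNIV - 1\<close>, except that \<open>x\<^sup>0\<close> is not
  interchangeable with \<open>x\<^bsup>card UNIV - 1\<^esup>\<close> at \<open>x = 0\<close>; hence the positivity conditions.\<close>
lemma power_eq_power_if_mod_eq:
  fixes x :: "'a :: {field,finite}"
  assumes "0 < e" "0 < e'"
    and "e mod (card (UNIV :: 'a set) - 1) = e' mod (card (UNIV :: 'a set) - 1)"
  shows "x ^ e = x ^ e'"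
proof (cases "x = 0")
  case False
  let ?M = "card (UNIV :: 'a set) - 1"
  have "x ^ ?M = 1" using False by (rule power_card_UNIV_minus_1)
  have reduce: "x ^ n = x ^ (n mod ?M)" for n
  proof -
    have "x ^ n = x ^ (n mod ?M + ?M * (n div ?M))" by simp
    also have "\<dots> = x ^ (n mod ?M)" by (simp only: power_add power_mult \<open>x ^ ?M = 1\<close>) simp
    finally show ?thesis .
  qed
  show ?thesis using reduce[of e] reduce[of e'] assms(3) by simp
qed (use assms in \<open>simp add: power_0_left\<close>)

lemma sum_monomials_eq_0_imp_coeffs_eq_0:
  fixes cs :: "'a :: {field,finite} list"
  defines "M \<equiv> card (UNIV :: 'a set) - 1"
  assumes len: "length cs = length ds"
    and vanish: "\<And>x :: 'a. (\<Sum>i<length ds. cs ! i * x ^ (ds ! i)) = 0"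
    and pos: "0 \<notin> set ds"
    and distinct: "distinct (map (\<lambda>d. d mod M) ds)"
  shows "set cs \<subseteq> {0}"
proof -
  have "2 \<le> card (UNIV :: 'a set)"
    using card_mono[of UNIV "{0, 1 :: 'a}"] by simp
  then have M: "0 < M" "M < card (UNIV :: 'a set)" unfolding M_def by simp_all
  define d where "d i = (if ds ! i mod M = 0 then M else ds ! i mod M)" for i
  have d_mod: "d i mod M = ds ! i mod M" for i unfolding d_def by simp
  have "x ^ (ds ! i) = x ^ d i" if "i < length ds" for i and x :: 'a
  proof (rule power_eq_power_if_mod_eq[where 'a = 'a, folded M_def])
    show "0 < ds ! i" using pos that by (metis gr0I nth_mem)
    show "0 < d i" "ds ! i mod M = d i mod M" using M(1) d_mod[of i] unfolding d_def by simp_all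
  qed
  then have "(\<Sum>i<length ds. cs ! i * x ^ d i) = 0" for x :: 'a
    using vanish[of x] by (metis (no_types, lifting) lessThan_iff sum.cong)
  moreover have "inj_on d {..<length ds}"
  proof (rule inj_onI)
    fix i j assume ij: "i \<in> {..<length ds}" "j \<in> {..<length ds}" and "d i = d j"
    then have "map (\<lambda>d. d mod M) ds ! i = map (\<lambda>d. d mod M) ds ! j"
      using d_mod[of i] d_mod[of j] by simp
    then show "i = j" using nth_eq_iff_index_eq[OF distinct] ij by simp
  qed
  moreover have "d i < card (UNIV :: 'a set)" for i
    using M mod_less_divisor[OF M(1), of "ds ! i"] unfolding d_def by auto
  ultimately have "cs ! j = 0" if "j < length ds" for j
    using sum_monomials_eq_0_imp_coeff_eq_0 that by blast
  then show ?thesis using len by (auto simp: in_set_conv_nth)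
qed

lemma card_eq_card_image_times_fiber:
  assumes "finite A" "\<And>a. a \<in> A \<Longrightarrow> card {x\<in>A. f x = f a} = k"
  shows "card A = card (f ` A) * k"
proof -
  have A: "A = (\<Union>b\<in>f ` A. {x\<in>A. f x = b})" by auto
  have "card A = (\<Sum>b\<in>f ` A. card {x\<in>A. f x = b})"
    by (subst A, rule card_UN_disjoint) (use assms(1) in auto)
  also have "\<dots> = (\<Sum>b\<in>f ` A. k)" by (rule sum.cong) (auto simp: assms(2))
  finally show ?thesis by simp
qed

lemma card_fiber_eq_card_kernel:
  fixes g :: "'a :: field \<Rightarrow> 'b :: field"
  assumes mult: "\<And>x y. g (x * y) = g x * g y" and "a \<noteq> 0" "g a \<noteq> 0"
  shows "card {x. x \<noteq> 0 \<and> g x = g a} = card {x. x \<noteq> 0 \<and> g x = 1}"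
proof -
  have "{x. x \<noteq> 0 \<and> g x = g a} = (\<lambda>t. a * t) ` {x. x \<noteq> 0 \<and> g x = 1}"
  proof (intro set_eqI iffI)
    fix x assume x: "x \<in> {x. x \<noteq> 0 \<and> g x = g a}"
    have "g a * g (x / a) = g a" using mult[of a "x / a"] x \<open>a \<noteq> 0\<close> by simp
    then have "x / a \<in> {x. x \<noteq> 0 \<and> g x = 1}" using x \<open>a \<noteq> 0\<close> \<open>g a \<noteq> 0\<close> by simp
    then show "x \<in> (\<lambda>t. a * t) ` {x. x \<noteq> 0 \<and> g x = 1}"
      using \<open>a \<noteq> 0\<close> by (auto intro!: image_eqI[of _ _ "x / a"])
  qed (use mult \<open>a \<noteq> 0\<close> in auto)
  then show ?thesis using \<open>a \<noteq> 0\<close> by (simp add: card_image inj_on_def)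
qed

lemma card_nonzero_eq_card_image_times_kernel:
  fixes g :: "'a :: {field,finite} \<Rightarrow> 'b :: field"
  assumes mult: "\<And>x y. g (x * y) = g x * g y" and nonzero: "\<And>x. x \<noteq> 0 \<Longrightarrow> g x \<noteq> 0"
  shows "card {x :: 'a. x \<noteq> 0} = card (g ` {x. x \<noteq> 0}) * card {x. x \<noteq> 0 \<and> g x = 1}"
  by (rule card_eq_card_image_times_fiber)
     (use card_fiber_eq_card_kernel[OF mult] nonzero in auto)

lemma factors_eq_if_mult_eq:
  fixes a b c d :: nat
  assumes "a \<le> c" "b \<le> d" "a * b = c * d" "0 < c" "0 < d"
  shows "a = c" "b = d"
proof -
  have "a * b \<le> a * d" using assms(2) by (rule mult_le_mono2)
  moreover have "a * d \<le> c * d" using assms(1) by (rule mult_le_mono1)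
  ultimately have "a * d = c * d" "a * b = a * d" using assms(3) by linarith+
  then show "a = c" using assms(5) by simp
  then show "b = d" using \<open>a * b = a * d\<close> assms(4) by simp
qed

section \<open>Projective coordinates\<close>

lemma sc_simp [simp]: "sc k (x, y, z) = (k * x, k * y, k * z)"
  by (simp add: sc_def)

lemma dot_simp [simp]: "dot (a, b, c) (x, y, z) = a * x + b * y + c * z"
  by (simp add: dot_def)

lemma det3_simp [simp]:
  "det3 (a, b, c) (d, e, f) (g, h, i) = a * (e * i - f * h) - b * (d * i - f * g) + c * (d * h - e * g)"
  by (simp add: det3_def)

lemma sc_sc: "sc k (sc l v) = sc (k * l) (v :: 'a :: field trip)"
  by (cases v) (simp add: mult.assoc)

lemma mem_pt: "w \<in> pt v \<longleftrightarrow> (\<exists>k. k \<noteq> 0 \<and> w = sc k v)"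
  unfolding pt_def by auto

lemma in_pt_self: "v \<in> pt (v :: 'a :: field trip)"
  unfolding mem_pt by (intro exI[of _ 1]) (cases v, simp)

lemma pt_eq_iff: "pt u = pt v \<longleftrightarrow> (\<exists>k. k \<noteq> 0 \<and> u = sc k (v :: 'a :: field trip))"
proof
  assume "pt u = pt v"
  then show "\<exists>k. k \<noteq> 0 \<and> u = sc k v" using in_pt_self[of u] mem_pt by blast
next
  assume "\<exists>k. k \<noteq> 0 \<and> u = sc k v"
  then obtain k where k: "k \<noteq> 0" "u = sc k v" by blast
  show "pt u = pt v"
  proof (rule set_eqI)
    fix w
    show "w \<in> pt u \<longleftrightarrow> w \<in> pt v"
    proof
      assume "w \<in> pt u"
      then obtain l where "l \<noteq> 0" "w = sc l u" using mem_pt by blast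
      then show "w \<in> pt v" using k unfolding mem_pt by (intro exI[of _ "l * k"]) (simp add: sc_sc)
    next
      assume "w \<in> pt v"
      then obtain l where l: "l \<noteq> 0" "w = sc l v" using mem_pt by blast
      then have "w = sc (l / k) u" using k by (simp add: sc_sc)
      then show "w \<in> pt u" using k l unfolding mem_pt by (intro exI[of _ "l / k"]) simp
    qed
  qed
qed

lemma pt_affine_eq_iff: "pt (a, b, 1) = pt (a', b', 1 :: 'a :: field) \<longleftrightarrow> a = a' \<and> b = b'"
  by (auto simp: pt_eq_iff)

lemma inc_pt: "inc (pt p) (pt l) \<longleftrightarrow> dot l (p :: 'a :: field trip) = 0"
proof
  have scale: "dot (sc k l) (sc m p) = k * m * dot l p" for k m
    by (cases l, cases p) (simp add: algebra_simps)
  assume "inc (pt p) (pt l)"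
  then obtain p' l' where "p' \<in> pt p" "l' \<in> pt l" "dot l' p' = 0" unfolding inc_def by blast
  then obtain k m where "k \<noteq> 0" "m \<noteq> 0" "dot (sc m l) (sc k p) = 0" unfolding mem_pt by blast
  then show "dot l p = 0" using scale by simp
next
  assume "dot l p = 0"
  then show "inc (pt p) (pt l)" unfolding inc_def using in_pt_self by blast
qed

lemma dep3_pt: "dep3 (pt u) (pt v) (pt w) \<longleftrightarrow> det3 u v (w :: 'a :: field trip) = 0"
proof
  have scale: "det3 (sc k u) (sc l v) (sc m w) = k * l * m * det3 u v w" for k l m
    by (cases u, cases v, cases w) (simp add: algebra_simps)
  assume "dep3 (pt u) (pt v) (pt w)"
  then obtain u' v' w' where "u' \<in> pt u" "v' \<in> pt v" "w' \<in> pt w" "det3 u' v' w' = 0"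
    unfolding dep3_def by blast
  then obtain k l m where "k \<noteq> 0" "l \<noteq> 0" "m \<noteq> 0" "det3 (sc k u) (sc l v) (sc m w) = 0"
    unfolding mem_pt by blast
  then show "det3 u v w = 0" using scale by simp
next
  assume "det3 u v w = 0"
  then show "dep3 (pt u) (pt v) (pt w)" unfolding dep3_def using in_pt_self by blast
qed

lemma PG_iff: "P \<in> PG \<longleftrightarrow> (\<exists>v. v \<noteq> (0, 0, 0) \<and> P = pt v)"
  unfolding PG_def by auto

lemma inc_mT_iff: "inc (pt (x, y, z)) mT \<longleftrightarrow> z = (0 :: 'a :: field)"
  unfolding mT_def inc_pt by simp

lemma off_mT_iff: "P \<in> PG \<and> \<not> inc P mT \<longleftrightarrow> (\<exists>a b. P = pt (a, b, 1 :: 'a :: field))"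
proof
  assume P: "P \<in> PG \<and> \<not> inc P mT"
  then obtain x y z where xyz: "P = pt (x, y, z)" "(x, y, z) \<noteq> (0, 0, 0)" unfolding PG_iff by auto
  then have "z \<noteq> 0" using P inc_mT_iff by blast
  then have "pt (x, y, z) = pt (x / z, y / z, 1)" unfolding pt_eq_iff by (intro exI[of _ z]) auto
  then show "\<exists>a b. P = pt (a, b, 1)" using xyz by blast
next
  assume "\<exists>a b. P = pt (a, b, 1 :: 'a :: field)"
  then obtain a b where P: "P = pt (a, b, 1 :: 'a)" by blast
  then have "P \<in> PG" unfolding PG_iff by (intro exI[of _ "(a, b, 1)"]) auto
  then show "P \<in> PG \<and> \<not> inc P mT" using P by (simp add: inc_mT_iff)
qed

lemma on_mT_iff:
  "P \<in> PG \<and> inc P mT \<longleftrightarrow> (\<exists>x y. (x, y) \<noteq> (0, 0) \<and> P = pt (x, y, 0 :: 'a :: field))"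
proof
  assume P: "P \<in> PG \<and> inc P mT"
  then obtain x y z where xyz: "P = pt (x, y, z)" "(x, y, z) \<noteq> (0, 0, 0)" unfolding PG_iff by auto
  then have "z = 0" using P inc_mT_iff by blast
  then show "\<exists>x y. (x, y) \<noteq> (0, 0) \<and> P = pt (x, y, 0)" using xyz by auto
next
  assume "\<exists>x y. (x, y) \<noteq> (0, 0) \<and> P = pt (x, y, 0 :: 'a :: field)"
  then obtain x y where P: "(x, y) \<noteq> (0, 0)" "P = pt (x, y, 0 :: 'a)" by blast
  then have "P \<in> PG" unfolding PG_iff by (intro exI[of _ "(x, y, 0)"]) auto
  then show "P \<in> PG \<and> inc P mT" using P by (simp add: inc_mT_iff)
qed

lemma pt_on_mT_eqI:
  fixes r0 r1 u v :: "'a :: field"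
  assumes "(r0, r1) \<noteq> (0, 0)" "(u, v) \<noteq> (0, 0)" "r1 * u = r0 * v"
  shows "pt (r0, r1, 0) = pt (u, v, 0)"
proof (cases "u = 0")
  case True
  then have "v \<noteq> 0" "r0 = 0" using assms by auto
  then show ?thesis unfolding pt_eq_iff using True by (intro exI[of _ "r1 / v"]) (use assms in auto)
next
  case False
  then have "r1 = r0 * v / u" "r0 \<noteq> 0" using assms by (auto simp: field_simps)
  then show ?thesis unfolding pt_eq_iff using False by (intro exI[of _ "r0 / u"]) auto
qed

section \<open>The Frobenius map and the norm\<close>

locale cubic_extension =
  fixes q :: nat
  assumes prime_power: "\<exists>p k. prime p \<and> k > 0 \<and> q = p ^ k"
    and card_UNIV: "card (UNIV :: 'a :: {field,finite} set) = q ^ 3"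
begin

lemma q_ge_2: "q \<ge> 2"
proof -
  obtain p k where p: "prime p" "k > 0" "q = p ^ k" using prime_power by blast
  have "p ^ 1 \<le> p ^ k" using p prime_gt_0_nat[OF p(1)] by (intro power_increasing) auto
  then show ?thesis using p prime_ge_2_nat[OF p(1)] by simp
qed

definition frob :: "'a \<Rightarrow> 'a" where "frob x = x ^ q"

lemma q_eq_CHAR_power: "\<exists>k > 0. q = CHAR('a) ^ k"
proof -
  obtain p k where p: "prime p" "k > 0" "q = p ^ k" using prime_power by blast
  have "card (UNIV :: 'a set) = p ^ (k * 3)" using card_UNIV p(3) by (simp add: power_mult)
  then have "CHAR('a) = p" by (rule CHAR_eq_prime_if_card_UNIV[OF p(1)])
  then show ?thesis using p by blast
qed

lemma prime_CHAR: "prime CHAR('a)"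
  by (intro prime_CHAR_semidom finite_imp_CHAR_pos) simp

lemma frob_add: "frob (x + y) = frob x + frob y"
  using q_eq_CHAR_power unfolding frob_def by (metis prime_CHAR freshmans_dream')

lemma frob_mult: "frob (x * y) = frob x * frob y"
  unfolding frob_def by (simp add: power_mult_distrib)

lemma frob_0 [simp]: "frob 0 = 0"
  unfolding frob_def using q_ge_2 by simp

lemma frob_1 [simp]: "frob 1 = 1"
  unfolding frob_def by simp

lemma frob_minus: "frob (- x) = - frob x"
  using frob_add[of x "- x"] by (simp add: eq_neg_iff_add_eq_0 add.commute)

lemma frob_diff: "frob (x - y) = frob x - frob y"
  using frob_add[of x "- y"] by (simp add: frob_minus)

lemma frob_frob_frob [simp]: "frob (frob (frob x)) = x"
proof -
  have "frob (frob (frob x)) = x ^ (q ^ 3)"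
    unfolding frob_def by (simp add: power_mult[symmetric] power3_eq_cube mult.assoc)
  then show ?thesis using power_card_UNIV_eq_self[of x] card_UNIV by simp
qed

lemma frob_eq_iff: "frob x = frob y \<longleftrightarrow> x = y"
  by (metis frob_frob_frob)

lemma frob_eq_0_iff [simp]: "frob x = 0 \<longleftrightarrow> x = 0"
  using frob_eq_iff[of x 0] by simp

lemma frob_divide: "frob (x / y) = frob x / frob y"
  unfolding frob_def by (simp add: power_divide)

lemma power_q_squared: "x ^ (q^2) = frob (frob x)"
  unfolding frob_def by (simp add: power2_eq_square power_mult)

abbreviation N :: "'a \<Rightarrow> 'a" where "N \<equiv> normq q"

lemma normq_eq: "N x = x * frob x * frob (frob x)"
  unfolding normq_def frob_def
  by (simp add: power_add power2_eq_square power_mult mult.commute mult.left_commute)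

lemma normq_mult: "N (x * y) = N x * N y"
  unfolding normq_def by (simp add: power_mult_distrib)

lemma normq_divide: "N (x / y) = N x / N y"
  unfolding normq_def by (simp add: power_divide)

lemma normq_eq_0_iff [simp]: "N x = 0 \<longleftrightarrow> x = 0"
  unfolding normq_def by auto

lemma normq_0 [simp]: "N 0 = 0"
  unfolding normq_def by simp

lemma normq_1 [simp]: "N 1 = 1"
  unfolding normq_def by simp

lemma normq_minus: "N (- x) = - N x"
  unfolding normq_eq by (simp add: frob_minus)

lemma frob_normq [simp]: "frob (N x) = N x"
  unfolding normq_eq by (simp add: frob_mult)

lemma normq_frob [simp]: "N (frob x) = N x"
  unfolding normq_eq by simp

lemma card_nonzero: "card {x :: 'a. x \<noteq> 0} = q ^ 3 - 1"
proof -
  have "{x :: 'a. x \<noteq> 0} = UNIV - {0}" by auto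
  then show ?thesis by (simp add: card_Diff_singleton card_UNIV)
qed

lemma card_fixed_le: "card {x :: 'a. x \<noteq> 0 \<and> frob x = x} \<le> q - 1"
proof -
  have "{x :: 'a. x \<noteq> 0 \<and> frob x = x} \<subseteq> {x. x ^ (q - 1) = 1}"
  proof
    fix x :: 'a assume x: "x \<in> {x. x \<noteq> 0 \<and> frob x = x}"
    have "x * x ^ (q - 1) = x ^ q" using q_ge_2 by (simp flip: power_Suc)
    also have "\<dots> = x * 1" using x by (simp add: frob_def)
    finally show "x \<in> {x. x ^ (q - 1) = 1}" using x by simp
  qed
  moreover have "card {x :: 'a. x ^ (q - 1) = 1} \<le> q - 1"
    using q_ge_2 by (intro card_roots_power_eq_le) auto
  ultimately show ?thesis by (meson card_mono finite order.trans)
qed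

lemma card_normq_eq_1_le: "card {x. N x = 1} \<le> q^2 + q + 1"
  unfolding normq_def by (rule card_roots_power_eq_le) simp

lemma q_cubed_minus_1: "q ^ 3 - 1 = (q^2 + q + 1) * (q - 1)"
proof -
  obtain m where "q = Suc m" using q_ge_2 by (cases q) auto
  then show ?thesis by (simp add: algebra_simps power2_eq_square power3_eq_cube)
qed

text \<open>Counting the fibres of \<open>x \<mapsto> frob x / x\<close>, whose kernel is the fixed field:
  since \<open>q\<^sup>3 - 1 = (q\<^sup>2 + q + 1)(q - 1)\<close>, the two upper bounds above are attained.\<close>
lemma
  shows frob_quotient_image: "(\<lambda>x. frob x / x) ` {x. x \<noteq> 0} = {z. N z = 1}"
    and card_normq_eq_1: "card {z. N z = 1} = q^2 + q + 1"
    and card_fixed: "card {x :: 'a. x \<noteq> 0 \<and> frob x = x} = q - 1"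
proof -
  let ?h = "\<lambda>x :: 'a. frob x / x"
  have image_sub: "?h ` {x. x \<noteq> 0} \<subseteq> {z. N z = 1}"
    by (auto simp: normq_divide)
  have kernel: "{x. x \<noteq> 0 \<and> ?h x = 1} = {x. x \<noteq> 0 \<and> frob x = x}" by auto
  have "card {x :: 'a. x \<noteq> 0} = card (?h ` {x. x \<noteq> 0}) * card {x. x \<noteq> 0 \<and> frob x = x}"
    unfolding kernel[symmetric]
    by (rule card_nonzero_eq_card_image_times_kernel) (simp_all add: frob_mult)
  then have product: "card (?h ` {x. x \<noteq> 0}) * card {x. x \<noteq> 0 \<and> frob x = x} = (q^2 + q + 1) * (q - 1)"
    by (metis card_nonzero q_cubed_minus_1)
  have image_card_le: "card (?h ` {x. x \<noteq> 0}) \<le> card {z. N z = 1}"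
    using image_sub by (intro card_mono) simp_all
  then have image_le: "card (?h ` {x. x \<noteq> 0}) \<le> q^2 + q + 1"
    using card_normq_eq_1_le by linarith
  have "0 < q^2 + q + 1" "0 < q - 1" using q_ge_2 by simp_all
  note eqs = factors_eq_if_mult_eq[OF image_le card_fixed_le product this]
  show "card {x :: 'a. x \<noteq> 0 \<and> frob x = x} = q - 1" using eqs by simp
  show "?h ` {x. x \<noteq> 0} = {z. N z = 1}"
  proof (rule card_subset_eq[OF _ image_sub])
    show "card (?h ` {x. x \<noteq> 0}) = card {z. N z = 1}"
      using image_card_le card_normq_eq_1_le unfolding eqs(1) by (rule antisym)
  qed simp
  then show "card {z. N z = 1} = q^2 + q + 1" using eqs(1) by simp
qed

lemma hilbert90:
  assumes "N z = 1"
  shows "\<exists>y. y \<noteq> 0 \<and> z = frob y / y"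
proof -
  have "z \<in> (\<lambda>x. frob x / x) ` {x. x \<noteq> 0}" unfolding frob_quotient_image using assms by simp
  then show ?thesis by blast
qed

lemma normq_eq_1_iff: "N z = 1 \<longleftrightarrow> (\<exists>x. x \<noteq> 0 \<and> z = frob x / frob (frob x))"
proof
  assume "N z = 1"
  then have "N (1 / z) = 1" by (simp add: normq_divide)
  then obtain y where y: "y \<noteq> 0" "1 / z = frob y / y" using hilbert90 by blast
  then have "z = y / frob y" by (metis divide_divide_eq_right div_by_1 mult_1)
  then show "\<exists>x. x \<noteq> 0 \<and> z = frob x / frob (frob x)"
    using y(1) by (intro exI[of _ "frob (frob y)"]) simp
qed (auto simp: normq_divide)

lemma normq_image: "N ` {x. x \<noteq> 0} = {c :: 'a. c \<noteq> 0 \<and> frob c = c}"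
proof (rule card_subset_eq)
  show "N ` {x. x \<noteq> 0} \<subseteq> {c :: 'a. c \<noteq> 0 \<and> frob c = c}" by auto
  have kernel: "{x. x \<noteq> 0 \<and> N x = 1} = {x. N x = 1}" by auto
  have "card {x :: 'a. x \<noteq> 0} = card (N ` {x. x \<noteq> 0}) * card {x. N x = 1}"
    unfolding kernel[symmetric]
    by (rule card_nonzero_eq_card_image_times_kernel) (simp_all add: normq_mult)
  then have "(q - 1) * (q^2 + q + 1) = card (N ` {x :: 'a. x \<noteq> 0}) * (q^2 + q + 1)"
    by (metis card_nonzero q_cubed_minus_1 card_normq_eq_1 mult.commute)
  then have "card (N ` {x. x \<noteq> 0}) = q - 1" by (simp only: mult_cancel2) simp
  then show "card (N ` {x. x \<noteq> 0}) = card {c :: 'a. c \<noteq> 0 \<and> frob c = c}"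
    by (simp add: card_fixed)
qed simp

lemma card_normq_fiber:
  assumes "c \<noteq> 0" "frob c = c"
  shows "card {b. N b = c} = q^2 + q + 1"
proof -
  have "c \<in> N ` {x. x \<noteq> 0}" using assms by (simp add: normq_image)
  then obtain b where b: "b \<noteq> 0" "N b = c" by blast
  have "{x. N x = c} = {x. x \<noteq> 0 \<and> N x = N b}"
    using b(2) assms(1) by auto
  also have "card \<dots> = card {x. x \<noteq> 0 \<and> N x = 1}"
    using b(1) by (intro card_fiber_eq_card_kernel) (simp_all add: normq_mult)
  also have "{x. x \<noteq> 0 \<and> N x = 1} = {x. N x = 1}" by auto
  finally show ?thesis by (simp add: card_normq_eq_1)
qed

end

section \<open>Projections of the subplane\<close>

context cubic_extension
begin

lemma phi_pt: "phi q (pt (x, y, z)) = pt (frob z, frob x, frob y)"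
proof -
  let ?f = "\<lambda>(x, y, z). (frob z, frob x, frob y)"
  have "phi q (pt (x, y, z)) = ?f ` pt (x, y, z)" unfolding phi_def frob_def by simp
  also have "\<dots> = pt (frob z, frob x, frob y)"
  proof (rule set_eqI, rule iffI)
    fix w assume "w \<in> ?f ` pt (x, y, z)"
    then obtain v where "v \<in> pt (x, y, z)" "w = ?f v" by (rule imageE)
    then obtain k where "k \<noteq> 0" "w = ?f (sc k (x, y, z))" unfolding mem_pt by blast
    then show "w \<in> pt (frob z, frob x, frob y)"
      unfolding mem_pt by (intro exI[of _ "frob k"]) (simp add: frob_mult)
  next
    fix w assume "w \<in> pt (frob z, frob x, frob y)"
    then obtain k where k: "k \<noteq> 0" "w = sc k (frob z, frob x, frob y)" unfolding mem_pt by blast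
    then have "w = ?f (sc (frob (frob k)) (x, y, z))" by (simp add: frob_mult)
    moreover have "sc (frob (frob k)) (x, y, z) \<in> pt (x, y, z)"
      unfolding mem_pt using k(1) by (intro exI[of _ "frob (frob k)"]) simp
    ultimately show "w \<in> ?f ` pt (x, y, z)" by (rule image_eqI)
  qed
  finally show ?thesis .
qed

lemma subplane_eq: "subplane q = {pt (x, frob x, frob (frob x)) | x. x \<noteq> 0}"
  unfolding subplane_def by (simp add: power_q_squared frob_def)

lemma S_set_eq: "S_set q \<theta> = {pt (x * \<theta>, frob x, 0) | x. x \<noteq> 0}"
  unfolding S_set_def frob_def ..

lemma pt_affine_in_subplane_iff:
  "pt (a, b, 1) \<in> subplane q \<longleftrightarrow> (\<exists>x. x \<noteq> 0 \<and> a = x / frob (frob x) \<and> b = frob x / frob (frob x))"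
proof
  assume "pt (a, b, 1) \<in> subplane q"
  then obtain x where x: "x \<noteq> 0" "pt (a, b, 1) = pt (x, frob x, frob (frob x))"
    unfolding subplane_eq by auto
  then obtain k where "(a, b, 1) = sc k (x, frob x, frob (frob x))" unfolding pt_eq_iff by blast
  then show "\<exists>x. x \<noteq> 0 \<and> a = x / frob (frob x) \<and> b = frob x / frob (frob x)"
    using x(1) by (intro exI[of _ x]) (auto simp: field_simps)
next
  assume "\<exists>x. x \<noteq> 0 \<and> a = x / frob (frob x) \<and> b = frob x / frob (frob x)"
  then obtain x where x: "x \<noteq> 0" "a = x / frob (frob x)" "b = frob x / frob (frob x)" by blast
  then have "pt (a, b, 1) = pt (x, frob x, frob (frob x))"
    unfolding pt_eq_iff by (intro exI[of _ "1 / frob (frob x)"]) auto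
  then show "pt (a, b, 1) \<in> subplane q" unfolding subplane_eq using x(1) by auto
qed

lemma projection_point_nonzero:
  assumes "pt (a, b, 1) \<notin> subplane q" "x \<noteq> 0"
  shows "(x - a * frob (frob x), frob x - b * frob (frob x)) \<noteq> (0, 0)"
proof
  assume "(x - a * frob (frob x), frob x - b * frob (frob x)) = (0, 0)"
  then have "a = x / frob (frob x)" "b = frob x / frob (frob x)"
    using assms(2) by (auto simp: field_simps)
  then show False using assms unfolding pt_affine_in_subplane_iff by blast
qed

lemma projection_subplane:
  assumes P: "pt (a, b, 1) \<notin> subplane q"
  shows "projection (subplane q) (pt (a, b, 1)) =
    {pt (x - a * frob (frob x), frob x - b * frob (frob x), 0) | x. x \<noteq> 0}"
proof -
  note nonzero = projection_point_nonzero[OF P]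
  have det: "det3 (a, b, 1) (x, frob x, frob (frob x)) (r0, r1, 0) =
      r1 * (x - a * frob (frob x)) - r0 * (frob x - b * frob (frob x))" for x r0 r1
    by (simp add: algebra_simps)
  show ?thesis
  proof (rule set_eqI, rule iffI)
    fix R assume "R \<in> projection (subplane q) (pt (a, b, 1))"
    then have R: "R \<in> PG" "inc R mT" and "\<exists>Q\<in>subplane q. dep3 (pt (a, b, 1)) Q R"
      unfolding projection_def by auto
    then obtain x where x: "x \<noteq> 0" "dep3 (pt (a, b, 1)) (pt (x, frob x, frob (frob x))) R"
      unfolding subplane_eq by auto
    obtain r0 r1 where r: "(r0, r1) \<noteq> (0, 0)" "R = pt (r0, r1, 0)" using R on_mT_iff by blast
    have "r1 * (x - a * frob (frob x)) = r0 * (frob x - b * frob (frob x))"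
      using x(2) unfolding r(2) dep3_pt det by simp
    then have "R = pt (x - a * frob (frob x), frob x - b * frob (frob x), 0)"
      unfolding r(2) by (rule pt_on_mT_eqI[OF r(1) nonzero[OF x(1)]])
    then show "R \<in> {pt (x - a * frob (frob x), frob x - b * frob (frob x), 0) | x. x \<noteq> 0}"
      using x(1) by auto
  next
    fix R assume "R \<in> {pt (x - a * frob (frob x), frob x - b * frob (frob x), 0) | x. x \<noteq> 0}"
    then obtain x where x: "x \<noteq> 0" "R = pt (x - a * frob (frob x), frob x - b * frob (frob x), 0)"
      by auto
    have "R \<in> PG \<and> inc R mT" using on_mT_iff nonzero[OF x(1)] x(2) by blast
    moreover have "dep3 (pt (a, b, 1)) (pt (x, frob x, frob (frob x))) R"
      unfolding x(2) dep3_pt det by (simp add: mult.commute)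
    moreover have "pt (x, frob x, frob (frob x)) \<in> subplane q" unfolding subplane_eq using x(1) by auto
    ultimately show "R \<in> projection (subplane q) (pt (a, b, 1))" unfolding projection_def by auto
  qed
qed

lemma projection_eq_S_set_imp_norm_identity:
  assumes "pt (a, b, 1) \<notin> subplane q" "projection (subplane q) (pt (a, b, 1)) = S_set q \<theta>"
  shows "N (x - a * frob (frob x)) = N \<theta> * N (frob x - b * frob (frob x))"
proof (cases "x = 0")
  case False
  then have "pt (x - a * frob (frob x), frob x - b * frob (frob x), 0) \<in> S_set q \<theta>"
    using assms projection_subplane by auto
  then obtain y where "pt (x - a * frob (frob x), frob x - b * frob (frob x), 0) = pt (y * \<theta>, frob y, 0)"
    unfolding S_set_eq by auto
  then obtain k where "x - a * frob (frob x) = k * (y * \<theta>)" "frob x - b * frob (frob x) = k * frob y"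
    unfolding pt_eq_iff by auto
  then show ?thesis by (simp add: normq_mult)
qed simp

definition frob_exp :: "nat \<Rightarrow> nat \<Rightarrow> nat \<Rightarrow> nat" where
  "frob_exp i j k = i + q * (j + q * k)"

lemma power_frob_exp: "x ^ frob_exp i j k = x ^ i * frob x ^ j * frob (frob x) ^ k"
  unfolding frob_exp_def frob_def by (simp add: power_add power_mult power_mult_distrib mult.assoc)

lemma frob_exp_eq_iff:
  assumes "i < q" "j < q" "i' < q" "j' < q"
  shows "frob_exp i j k = frob_exp i' j' k' \<longleftrightarrow> i = i' \<and> j = j' \<and> k = k'"
proof
  assume e: "frob_exp i j k = frob_exp i' j' k'"
  have "frob_exp i j k mod q = i" "frob_exp i' j' k' mod q = i'"
    using assms unfolding frob_exp_def by auto
  then have i: "i = i'" using e by simp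
  have "frob_exp i j k div q = j + q * k" "frob_exp i' j' k' div q = j' + q * k'"
    using assms unfolding frob_exp_def by auto
  then have jk: "j + q * k = j' + q * k'" using e by simp
  then have "(j + q * k) mod q = (j' + q * k') mod q" by simp
  then have j: "j = j'" using assms by simp
  then show "i = i' \<and> j = j' \<and> k = k'" using i jk assms by simp
qed simp

lemma norm_difference_expansion:
  "N (x - a * frob (frob x)) - n * N (frob x - b * frob (frob x)) =
     ((1 - N a) - n * (1 - N b)) * x ^ frob_exp 1 1 1
   + (- frob (frob a) - n * frob b * frob (frob b)) * x ^ frob_exp 1 2 0
   + (- frob a - n * b * frob b) * x ^ frob_exp 2 0 1
   + (frob a * frob (frob a) + n * frob b) * x ^ frob_exp 2 1 0
   + (- a - n * b * frob (frob b)) * x ^ frob_exp 0 1 2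
   + (a * frob (frob a) + n * frob (frob b)) * x ^ frob_exp 0 2 1
   + (a * frob a + n * b) * x ^ frob_exp 1 0 2"
  unfolding power_frob_exp normq_eq by (simp add: frob_diff frob_mult power2_eq_square algebra_simps)

text \<open>For \<open>q = 2\<close> the digit \<open>2\<close> is not a base-\<open>q\<close> digit, and three of the exponents
  exceed \<open>q\<^sup>3 - 1\<close>; they are still distinct modulo \<open>q\<^sup>3 - 1\<close>.\<close>
lemma frob_exps_distinct_mod:
  "distinct (map (\<lambda>e. e mod (q ^ 3 - 1)) [frob_exp 1 1 1, frob_exp 1 2 0, frob_exp 2 0 1,
     frob_exp 2 1 0, frob_exp 0 1 2, frob_exp 0 2 1, frob_exp 1 0 2])"
proof (cases "q = 2")
  case True
  then show ?thesis unfolding frob_exp_def by simp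
next
  case False
  then have q: "3 \<le> q" using q_ge_2 by simp
  have "3 * q \<le> q * q" "3 * (q * q) \<le> q * (q * q)" using q by simp_all
  then have bound: "2 * (q * q) + q + 1 < q ^ 3" and "Suc q \<le> 2 * (q * q)"
    unfolding power3_eq_cube using q by linarith+
  let ?es = "[frob_exp 1 1 1, frob_exp 1 2 0, frob_exp 2 0 1,
     frob_exp 2 1 0, frob_exp 0 1 2, frob_exp 0 2 1, frob_exp 1 0 2]"
  have "\<forall>e\<in>set ?es. e \<le> 2 * (q * q) + q"
    using q \<open>Suc q \<le> 2 * (q * q)\<close> unfolding frob_exp_def by (simp add: distrib_left)
  then have less: "e < q ^ 3 - 1" if "e \<in> set ?es" for e
  proof -
    have "e \<le> 2 * (q * q) + q" using that \<open>\<forall>e\<in>set ?es. _\<close> by blast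
    then show ?thesis using bound by linarith
  qed
  then have "map (\<lambda>e. e mod (q ^ 3 - 1)) ?es = ?es" by (intro map_idI mod_less)
  moreover have "distinct ?es" using q by (simp add: frob_exp_eq_iff)
  ultimately show ?thesis by simp
qed

lemma norm_identity_coeffs:
  assumes "\<And>x. N (x - a * frob (frob x)) = n * N (frob x - b * frob (frob x))"
  shows "1 - N a - n * (1 - N b) = 0" "- a - n * b * frob (frob b) = 0" "a * frob a + n * b = 0"
proof -
  define cs where "cs = [(1 - N a) - n * (1 - N b), - frob (frob a) - n * frob b * frob (frob b),
     - frob a - n * b * frob b, frob a * frob (frob a) + n * frob b, - a - n * b * frob (frob b),
     a * frob (frob a) + n * frob (frob b), a * frob a + n * b]"
  define ds where "ds = [frob_exp 1 1 1, frob_exp 1 2 0, frob_exp 2 0 1,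
     frob_exp 2 1 0, frob_exp 0 1 2, frob_exp 0 2 1, frob_exp 1 0 2]"
  have "(\<Sum>i<length ds. cs ! i * x ^ (ds ! i)) = 0" for x
    using norm_difference_expansion[of x a n b] assms[of x]
    unfolding cs_def ds_def by (simp add: eval_nat_numeral algebra_simps)
  moreover have "0 \<notin> set ds"
    using q_ge_2 unfolding ds_def frob_exp_def by auto
  moreover have "distinct (map (\<lambda>d. d mod (card (UNIV :: 'a set) - 1)) ds)"
    using frob_exps_distinct_mod unfolding ds_def card_UNIV .
  moreover have "length cs = length ds" by (simp add: cs_def ds_def)
  ultimately have "set cs \<subseteq> {0}" by (intro sum_monomials_eq_0_imp_coeffs_eq_0)
  then show "1 - N a - n * (1 - N b) = 0" "- a - n * b * frob (frob b) = 0" "a * frob a + n * b = 0"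
    unfolding cs_def by simp_all
qed

lemma projection_vertex_coordinates:
  assumes \<theta>: "\<theta> \<noteq> 0" and P: "pt (a, b, 1) \<notin> subplane q"
    and proj: "projection (subplane q) (pt (a, b, 1)) = S_set q \<theta>"
  shows "(a = 0 \<and> b = 0 \<and> N \<theta> = 1) \<or> (b \<noteq> 0 \<and> a = 1 / frob b \<and> N b = -1 / N \<theta>)"
proof (cases "b = 0")
  note coeffs = norm_identity_coeffs[OF projection_eq_S_set_imp_norm_identity[OF P proj]]
  case True
  then have "a = 0" using coeffs(2) by simp
  then show ?thesis using coeffs(1) True by simp
next
  note coeffs = norm_identity_coeffs[OF projection_eq_S_set_imp_norm_identity[OF P proj]]
  case False
  have a: "a = - N \<theta> * b * frob (frob b)"
    using coeffs(2) by (simp add: diff_eq_eq) (metis minus_minus)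
  then have "frob a = - N \<theta> * frob b * b" by (simp add: frob_mult frob_minus)
  then have "a * frob a = N \<theta> * N \<theta> * b * N b" using a by (simp add: normq_eq algebra_simps)
  then have "N \<theta> * b * (N \<theta> * N b + 1) = 0" using coeffs(3) by (simp add: algebra_simps)
  then have Nb: "N \<theta> * N b = -1" using \<theta> False by (simp add: eq_neg_iff_add_eq_0)
  have "a * frob b = - (N \<theta> * N b)" using a by (simp add: normq_eq algebra_simps)
  then have "a = 1 / frob b" using Nb False by (simp add: field_simps)
  moreover have "N b = -1 / N \<theta>" using Nb \<theta> by (simp add: field_simps)
  ultimately show ?thesis using False by simp
qed

lemma projection_Tpt:
  assumes "\<theta> \<noteq> 0" "N \<theta> = 1"
  shows "projection (subplane q) Tpt = S_set q \<theta>"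
proof -
  have T: "Tpt = pt (0, 0, 1 :: 'a)" "pt (0, 0, 1 :: 'a) \<notin> subplane q"
    unfolding Tpt_def pt_affine_in_subplane_iff by auto
  obtain m where m: "m \<noteq> 0" "\<theta> = frob m / m" using hilbert90[OF assms(2)] by blast
  have rescale: "pt (x, frob x, 0) = pt ((x * m) * \<theta>, frob (x * m), 0)" if "x \<noteq> 0" for x
    unfolding pt_eq_iff using m that by (intro exI[of _ "1 / frob m"]) (auto simp: frob_mult)
  have "{pt (x, frob x, 0) | x. x \<noteq> 0} = {pt (y * \<theta>, frob y, 0) | y. y \<noteq> 0}"
  proof (rule set_eqI, rule iffI)
    fix R assume "R \<in> {pt (x, frob x, 0) | x. x \<noteq> 0}"
    then obtain x where "x \<noteq> 0" "R = pt (x, frob x, 0)" by auto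
    then show "R \<in> {pt (y * \<theta>, frob y, 0) | y. y \<noteq> 0}"
      using rescale m(1) by (intro CollectI exI[of _ "x * m"]) auto
  next
    fix R assume "R \<in> {pt (y * \<theta>, frob y, 0) | y. y \<noteq> 0}"
    then obtain y where "y \<noteq> 0" "R = pt (y * \<theta>, frob y, 0)" by auto
    then show "R \<in> {pt (x, frob x, 0) | x. x \<noteq> 0}"
      using rescale[of "y / m"] m(1) by (intro CollectI exI[of _ "y / m"]) auto
  qed
  then show ?thesis unfolding T projection_subplane[OF T(2)] S_set_eq by simp
qed

definition fig_pt :: "'a \<Rightarrow> 'a trip set" where
  "fig_pt b = pt (1 / frob b, b, 1)"

text \<open>The map \<open>x \<mapsto> x\<^sup>q - b x\<^bsup>q\<^sup>2\<^esup>\<close> is additive and, off the subplane, has trivial kernel,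
  so it can serve as the new parameter.\<close>
lemma projection_fig_pt_eq:
  assumes b: "b \<noteq> 0" and P: "fig_pt b \<notin> subplane q"
  shows "projection (subplane q) (fig_pt b) = {pt (- frob v / frob b, v, 0) | v. v \<noteq> 0}"
proof -
  let ?v = "\<lambda>x. frob x - b * frob (frob x)"
  have u: "x - 1 / frob b * frob (frob x) = - frob (?v x) / frob b" for x
    using b by (simp add: frob_diff frob_mult field_simps)
  have v0: "?v x \<noteq> 0" if "x \<noteq> 0" for x
  proof
    assume "?v x = 0"
    then have "(x - 1 / frob b * frob (frob x), ?v x) = (0, 0)" unfolding u by simp
    then show False using projection_point_nonzero[OF P[unfolded fig_pt_def] that] by blast
  qed
  have "inj ?v"
  proof (rule injI)
    fix x y assume "?v x = ?v y"
    then have "?v (x - y) = 0" by (simp add: frob_diff algebra_simps)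
    then show "x = y" using v0[of "x - y"] by auto
  qed
  then have "surj ?v" by (simp add: finite_UNIV_inj_surj)
  have "{pt (- frob (?v x) / frob b, ?v x, 0) | x. x \<noteq> 0} = {pt (- frob v / frob b, v, 0) | v. v \<noteq> 0}"
  proof (intro equalityI subsetI)
    fix R assume "R \<in> {pt (- frob (?v x) / frob b, ?v x, 0) | x. x \<noteq> 0}"
    then obtain x where "x \<noteq> 0" "R = pt (- frob (?v x) / frob b, ?v x, 0)" by blast
    then show "R \<in> {pt (- frob v / frob b, v, 0) | v. v \<noteq> 0}" using v0 by blast
  next
    fix R assume "R \<in> {pt (- frob v / frob b, v, 0) | v. v \<noteq> 0}"
    then obtain v where v: "v \<noteq> 0" "R = pt (- frob v / frob b, v, 0)" by blast
    obtain x where x: "v = ?v x" using surjD[OF \<open>surj ?v\<close>] by blast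
    with v(1) have "x \<noteq> 0" by (cases "x = 0") simp_all
    then show "R \<in> {pt (- frob (?v x) / frob b, ?v x, 0) | x. x \<noteq> 0}" using v(2) x by blast
  qed
  then show ?thesis
    unfolding fig_pt_def projection_subplane[OF P[unfolded fig_pt_def]] u .
qed

lemma pt_rescale_to_S_set:
  assumes "\<theta> * frob b * frob m = - m" "m \<noteq> 0" "b \<noteq> 0" "v \<noteq> 0"
  shows "pt (- frob v / frob b, v, 0) = pt (1 / (m * v) * \<theta>, frob (1 / (m * v)), 0)"
proof -
  have "\<theta> * (frob b * (frob m * frob v)) = - (m * frob v)"
    using arg_cong[OF assms(1), of "\<lambda>t. t * frob v"] by (simp add: algebra_simps)
  then have "- frob v / frob b = (v * frob m * frob v) * (1 / (m * v) * \<theta>)"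
    using assms(2-4) by (simp add: field_simps)
  moreover have "v = (v * frob m * frob v) * frob (1 / (m * v))"
    using assms(2,4) by (simp add: frob_divide frob_mult field_simps)
  ultimately show ?thesis
    unfolding pt_eq_iff using assms(2,4) by (intro exI[of _ "v * frob m * frob v"]) simp
qed

lemma projection_fig_pt:
  assumes \<theta>: "\<theta> \<noteq> 0" and b: "b \<noteq> 0" and Nb: "N b = -1 / N \<theta>"
    and P: "fig_pt b \<notin> subplane q"
  shows "projection (subplane q) (fig_pt b) = S_set q \<theta>"
proof -
  have "N (-1 / (\<theta> * frob b)) = 1" using \<theta> b Nb by (simp add: normq_divide normq_mult normq_minus)
  then obtain m where m: "m \<noteq> 0" "-1 / (\<theta> * frob b) = frob m / m" using hilbert90 by blast
  then have m': "\<theta> * frob b * frob m = - m" using \<theta> b by (simp add: field_simps)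
  note rescale = pt_rescale_to_S_set[OF m' m(1) b]
  have "{pt (- frob v / frob b, v, 0) | v. v \<noteq> 0} = {pt (y * \<theta>, frob y, 0) | y. y \<noteq> 0}"
  proof (intro equalityI subsetI)
    fix R assume "R \<in> {pt (- frob v / frob b, v, 0) | v. v \<noteq> 0}"
    then obtain v where "v \<noteq> 0" "R = pt (- frob v / frob b, v, 0)" by blast
    then show "R \<in> {pt (y * \<theta>, frob y, 0) | y. y \<noteq> 0}"
      using rescale m(1) by (intro CollectI exI[of _ "1 / (m * v)"]) simp
  next
    fix R assume "R \<in> {pt (y * \<theta>, frob y, 0) | y. y \<noteq> 0}"
    then obtain y where y: "y \<noteq> 0" "R = pt (y * \<theta>, frob y, 0)" by blast
    have "1 / (m * (1 / (m * y))) = y" using m(1) y(1) by simp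
    then have "R = pt (- frob (1 / (m * y)) / frob b, 1 / (m * y), 0)"
      using rescale[of "1 / (m * y)"] m(1) y by simp
    then show "R \<in> {pt (- frob v / frob b, v, 0) | v. v \<noteq> 0}"
      using m(1) y(1) by (intro CollectI exI[of _ "1 / (m * y)"]) simp
  qed
  then show ?thesis unfolding projection_fig_pt_eq[OF b P] S_set_eq .
qed

end

section \<open>Projection vertices\<close>

context cubic_extension
begin

lemma Tpt_eq: "Tpt = pt (0, 0, 1 :: 'a)"
  unfolding Tpt_def ..

lemma Tpt_off_mT_and_subplane:
  "(Tpt :: 'a trip set) \<in> PG" "\<not> inc (Tpt :: 'a trip set) mT" "(Tpt :: 'a trip set) \<notin> subplane q"
proof -
  show "(Tpt :: 'a trip set) \<in> PG" "\<not> inc (Tpt :: 'a trip set) mT"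
    unfolding Tpt_eq using off_mT_iff[of "pt (0, 0, 1 :: 'a)"] by blast+
  show "(Tpt :: 'a trip set) \<notin> subplane q" unfolding Tpt_eq pt_affine_in_subplane_iff by simp
qed

lemma fig_pt_off_mT: "fig_pt b \<in> PG" "\<not> inc (fig_pt b) mT"
  unfolding fig_pt_def using off_mT_iff by blast+

lemma fig_pt_eq_iff: "fig_pt b = fig_pt b' \<longleftrightarrow> b = b'"
  unfolding fig_pt_def pt_affine_eq_iff by auto

lemma fig_pt_ne_Tpt: "b \<noteq> 0 \<Longrightarrow> fig_pt b \<noteq> Tpt"
  unfolding fig_pt_def Tpt_eq pt_affine_eq_iff by simp

lemma fig_pt_in_subplane_iff: "fig_pt b \<in> subplane q \<longleftrightarrow> N b = 1"
proof -
  have "1 / frob b = x / frob (frob x)" if "b = frob x / frob (frob x)" for x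
    using that by (simp add: frob_divide)
  then show ?thesis
    unfolding fig_pt_def pt_affine_in_subplane_iff normq_eq_1_iff by blast
qed

lemma vertices_eq:
  assumes \<theta>: "\<theta> \<noteq> 0"
  shows "vertices q \<theta> = (if N \<theta> = 1 then {Tpt} else {}) \<union>
    {fig_pt b | b. b \<noteq> 0 \<and> N b = -1 / N \<theta> \<and> N b \<noteq> 1}"
proof (rule set_eqI, rule iffI)
  fix P assume "P \<in> vertices q \<theta>"
  then have P: "P \<in> PG" "\<not> inc P mT" "P \<notin> subplane q" "projection (subplane q) P = S_set q \<theta>"
    unfolding vertices_def by auto
  then obtain a b where ab: "P = pt (a, b, 1)" using off_mT_iff by blast
  have "(a = 0 \<and> b = 0 \<and> N \<theta> = 1) \<or> (b \<noteq> 0 \<and> a = 1 / frob b \<and> N b = -1 / N \<theta>)"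
    using projection_vertex_coordinates[OF \<theta>] P(3,4) unfolding ab by blast
  then show "P \<in> (if N \<theta> = 1 then {Tpt} else {}) \<union> {fig_pt b | b. b \<noteq> 0 \<and> N b = -1 / N \<theta> \<and> N b \<noteq> 1}"
  proof
    assume "a = 0 \<and> b = 0 \<and> N \<theta> = 1"
    then show ?thesis unfolding ab Tpt_eq by simp
  next
    assume b: "b \<noteq> 0 \<and> a = 1 / frob b \<and> N b = -1 / N \<theta>"
    then have "P = fig_pt b" unfolding ab fig_pt_def by simp
    moreover have "N b \<noteq> 1" using fig_pt_in_subplane_iff P(3) calculation by blast
    ultimately show ?thesis using b by blast
  qed
next
  fix P assume "P \<in> (if N \<theta> = 1 then {Tpt} else {}) \<union> {fig_pt b | b. b \<noteq> 0 \<and> N b = -1 / N \<theta> \<and> N b \<noteq> 1}"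
  then consider "N \<theta> = 1" "P = Tpt" | b where "b \<noteq> 0" "N b = -1 / N \<theta>" "N b \<noteq> 1" "P = fig_pt b"
    by (auto split: if_splits)
  then show "P \<in> vertices q \<theta>"
  proof cases
    case 1
    then show ?thesis unfolding vertices_def using Tpt_off_mT_and_subplane projection_Tpt[OF \<theta>] by simp
  next
    case (2 b)
    then have "fig_pt b \<notin> subplane q" using fig_pt_in_subplane_iff by blast
    then show ?thesis
      unfolding vertices_def using 2 fig_pt_off_mT projection_fig_pt[OF \<theta>] by simp
  qed
qed

lemma Pi_set_eq:
  assumes \<eta>: "\<eta> \<noteq> 0"
  shows "Pi_set q \<eta> = {fig_pt b | b. b \<noteq> 0 \<and> N b = 1 / N \<eta>}"
proof -
  have Pi_point: "pt (r * \<eta> ^ (q + 1), r ^ q, r ^ (q^2) * \<eta>) = fig_pt (frob r / (frob (frob r) * \<eta>))"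
    if "r \<noteq> 0" for r
  proof -
    have "\<eta> ^ (q + 1) = frob \<eta> * \<eta>" "r ^ q = frob r" "r ^ (q^2) = frob (frob r)"
      by (simp_all add: frob_def power2_eq_square power_mult mult.commute)
    then show ?thesis
      unfolding fig_pt_def pt_eq_iff using that \<eta>
      by (intro exI[of _ "frob (frob r) * \<eta>"]) (simp add: frob_divide frob_mult field_simps)
  qed
  show ?thesis
  proof (rule set_eqI, rule iffI)
    fix P assume "P \<in> Pi_set q \<eta>"
    then obtain r where r: "r \<noteq> 0" "P = pt (r * \<eta> ^ (q + 1), r ^ q, r ^ (q^2) * \<eta>)"
      unfolding Pi_set_def by auto
    moreover have "N (frob r / (frob (frob r) * \<eta>)) = 1 / N \<eta>"
      using r(1) \<eta> by (simp add: normq_divide normq_mult)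
    ultimately show "P \<in> {fig_pt b | b. b \<noteq> 0 \<and> N b = 1 / N \<eta>}"
      using Pi_point \<eta> by (intro CollectI exI[of _ "frob r / (frob (frob r) * \<eta>)"]) simp
  next
    fix P assume "P \<in> {fig_pt b | b. b \<noteq> 0 \<and> N b = 1 / N \<eta>}"
    then obtain b where b: "b \<noteq> 0" "N b = 1 / N \<eta>" "P = fig_pt b" by auto
    then have "N (b * \<eta>) = 1" using \<eta> by (simp add: normq_mult)
    then obtain r where r: "r \<noteq> 0" "b * \<eta> = frob r / frob (frob r)"
      unfolding normq_eq_1_iff by blast
    then have "b = frob r / (frob (frob r) * \<eta>)" using \<eta> by (simp add: field_simps)
    then show "P \<in> Pi_set q \<eta>"
      unfolding Pi_set_def b(3) using Pi_point[OF r(1)] r(1) by auto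
  qed
qed

lemma E_set_Tpt_on_mT:
  assumes "P \<in> E_set q (Tpt :: 'a trip set)"
  shows "inc P mT"
proof -
  have "P \<in> PG" and dep: "dep3 (phi q Tpt) (phi q (phi q Tpt)) P"
    using assms unfolding E_set_def typeII_pt_def by auto
  then obtain x y z where P: "P = pt (x, y, z)" unfolding PG_iff by auto
  have "dep3 (pt (1, 0, 0)) (pt (0, 1, 0)) (pt (x, y, z))"
    using dep unfolding P Tpt_eq phi_pt by simp
  then show ?thesis unfolding P by (simp add: dep3_pt inc_mT_iff)
qed

text \<open>A line through \<open>T\<close> is \<open>[l\<^sub>0, l\<^sub>1, 0]\<close>; it has Type III exactly when
  \<open>N l\<^sub>0 + N l\<^sub>1 \<noteq> 0\<close>, and its two conjugates meet in \<open>fig_pt (- l\<^sub>1\<^sup>q / l\<^sub>0\<^sup>q)\<close>.\<close>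
lemma F_set_Tpt_off_mT:
  assumes "P \<in> F_set q Tpt" "\<not> inc P mT"
  obtains b where "b \<noteq> 0" "N b \<noteq> 1" "P = fig_pt b"
proof -
  obtain l where P: "P \<in> PG"
    and l: "typeIII q l" "inc Tpt l" "inc P (phi q l)" "inc P (phi q (phi q l))"
    using assms(1) unfolding F_set_def by blast
  obtain y0 y1 where Py: "P = pt (y0, y1, 1)" using P assms(2) off_mT_iff by blast
  obtain l0 l1 l2 where lv: "(l0, l1, l2) \<noteq> (0, 0, 0)" "l = pt (l0, l1, l2)"
    using l(1) unfolding typeIII_def PG_iff by auto
  have l2: "l2 = 0" using l(2) unfolding lv(2) Tpt_eq inc_pt by simp
  have e1: "frob l0 * y1 + frob l1 = 0"
    using l(3) unfolding lv(2) Py phi_pt inc_pt l2 by (simp add: mult.commute)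
  have e2: "frob (frob l1) * y0 + frob (frob l0) = 0"
    using l(4) unfolding lv(2) Py phi_pt inc_pt l2 by (simp add: mult.commute)
  have det: "N l0 + N l1 \<noteq> 0" using l(1) unfolding typeIII_def lv(2) phi_pt dep3_pt l2
    by (simp add: normq_eq algebra_simps)
  have "l0 \<noteq> 0" using e1 lv(1) l2 by auto
  moreover have "l1 \<noteq> 0" using e2 \<open>l0 \<noteq> 0\<close> by auto
  ultimately have y: "y1 = - frob l1 / frob l0" "y0 = - frob (frob l0) / frob (frob l1)"
    using e1 e2 by (simp_all add: field_simps eq_neg_iff_add_eq_0)
  show thesis
  proof
    show "y1 \<noteq> 0" using y(1) \<open>l0 \<noteq> 0\<close> \<open>l1 \<noteq> 0\<close> by simp
    show "P = fig_pt y1" unfolding Py fig_pt_def y using \<open>l0 \<noteq> 0\<close> \<open>l1 \<noteq> 0\<close>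
      by (simp add: frob_divide frob_minus)
    show "N y1 \<noteq> 1"
    proof
      assume "N y1 = 1"
      then have "- N l1 / N l0 = 1" unfolding y(1) by (simp add: normq_divide normq_minus)
      then have "- N l1 = N l0" using \<open>l0 \<noteq> 0\<close> by (simp add: field_simps)
      then show False using det by (metis add.commute add.right_inverse)
    qed
  qed
qed

lemma fig_pt_in_F_set:
  assumes "b \<noteq> 0" "N b \<noteq> 1"
  shows "fig_pt b \<in> F_set q Tpt"
proof -
  let ?l = "pt (1, - frob (frob b), 0 :: 'a)"
  have "det3 (1, - frob (frob b), 0) (0, 1, - b) (- frob b, 0, 1) = 1 - N b"
    by (simp add: normq_eq algebra_simps)
  then have "\<not> dep3 ?l (phi q ?l) (phi q (phi q ?l))"
    unfolding phi_pt dep3_pt using assms(2) by (simp add: frob_minus)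
  moreover have "?l \<in> PG" unfolding PG_iff by (intro exI[of _ "(1, - frob (frob b), 0)"]) simp
  ultimately have "typeIII q ?l" unfolding typeIII_def by blast
  moreover have "inc Tpt ?l" "inc (fig_pt b) (phi q ?l)" "inc (fig_pt b) (phi q (phi q ?l))"
    unfolding Tpt_eq fig_pt_def phi_pt inc_pt using assms(1) by (simp_all add: frob_minus)
  ultimately show ?thesis unfolding F_set_def using fig_pt_off_mT by blast
qed

lemma Fig_Tpt_off_mT: "{P \<in> Fig q (Tpt :: 'a trip set). \<not> inc P mT} = {fig_pt b | b. b \<noteq> 0 \<and> N b \<noteq> 1}"
proof (rule set_eqI, rule iffI)
  fix P assume "P \<in> {P \<in> Fig q (Tpt :: 'a trip set). \<not> inc P mT}"
  then have "P \<in> F_set q Tpt" "\<not> inc P mT" unfolding Fig_def using E_set_Tpt_on_mT by auto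
  then show "P \<in> {fig_pt b | b. b \<noteq> 0 \<and> N b \<noteq> 1}" by (elim F_set_Tpt_off_mT) auto
next
  fix P assume "P \<in> {fig_pt b | b. b \<noteq> 0 \<and> N b \<noteq> 1}"
  then show "P \<in> {P \<in> Fig q (Tpt :: 'a trip set). \<not> inc P mT}"
    unfolding Fig_def using fig_pt_in_F_set fig_pt_off_mT by blast
qed

lemma card_fig_pts:
  assumes "c \<noteq> 0" "frob c = c"
  shows "card {fig_pt b | b. b \<noteq> 0 \<and> N b = c} = q^2 + q + 1"
proof -
  have "{fig_pt b | b. b \<noteq> 0 \<and> N b = c} = fig_pt ` {b. b \<noteq> 0 \<and> N b = c}" by blast
  also have "{b. b \<noteq> 0 \<and> N b = c} = {b. N b = c}" using assms(1) by auto
  finally have "{fig_pt b | b. b \<noteq> 0 \<and> N b = c} = fig_pt ` {b. N b = c}" .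
  moreover have "inj_on fig_pt {b. N b = c}" by (simp add: inj_on_def fig_pt_eq_iff)
  ultimately show ?thesis using card_normq_fiber[OF assms] by (simp add: card_image)
qed

lemma card_Pi_set:
  assumes "(\<eta> :: 'a) \<noteq> 0"
  shows "card (Pi_set q \<eta>) = q^2 + q + 1"
  unfolding Pi_set_eq[OF assms] using assms by (intro card_fig_pts) (simp_all add: frob_divide)

lemma Tpt_notin_Pi_set:
  assumes "(\<eta> :: 'a) \<noteq> 0"
  shows "Tpt \<notin> Pi_set q \<eta>"
  unfolding Pi_set_eq[OF assms] using fig_pt_ne_Tpt by blast

lemma vertices_eq_Pi_set:
  assumes "\<theta> \<noteq> 0" "N \<theta> \<noteq> 1" "N \<theta> \<noteq> -1"
  shows "vertices q \<theta> = Pi_set q (- \<theta>)"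
proof -
  have "-1 / N \<theta> \<noteq> 1" using assms by (simp add: field_simps)
  then have redundant: "(b \<noteq> 0 \<and> N b = -1 / N \<theta> \<and> N b \<noteq> 1) \<longleftrightarrow> (b \<noteq> 0 \<and> N b = -1 / N \<theta>)" for b
    by auto
  have "1 / N (- \<theta>) = -1 / N \<theta>" by (simp add: normq_minus)
  moreover have "- \<theta> \<noteq> 0" using assms(1) by simp
  ultimately show ?thesis
    unfolding vertices_eq[OF assms(1)] Pi_set_eq[OF \<open>- \<theta> \<noteq> 0\<close>]
    by (simp only: redundant assms(2) if_False Un_empty_left)
qed

lemma all_vertices_eq:
  "{P \<in> PG. P \<notin> subplane q \<and> \<not> inc P mT \<and>
     (\<exists>\<theta> :: 'a. \<theta> \<noteq> 0 \<and> projection (subplane q) P = S_set q \<theta>)} =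
   insert Tpt {fig_pt b | b. b \<noteq> 0 \<and> N b \<noteq> 1}"
proof -
  have "{P \<in> PG. P \<notin> subplane q \<and> \<not> inc P mT \<and>
     (\<exists>\<theta> :: 'a. \<theta> \<noteq> 0 \<and> projection (subplane q) P = S_set q \<theta>)} = (\<Union>\<theta>\<in>{\<theta> :: 'a. \<theta> \<noteq> 0}. vertices q \<theta>)"
    unfolding vertices_def by auto
  also have "\<dots> = insert Tpt {fig_pt b | b. b \<noteq> 0 \<and> N b \<noteq> 1}"
  proof (rule set_eqI, rule iffI)
    fix P assume "P \<in> (\<Union>\<theta>\<in>{\<theta> :: 'a. \<theta> \<noteq> 0}. vertices q \<theta>)"
    then obtain \<theta> where "\<theta> \<noteq> 0" "P \<in> vertices q \<theta>" by blast
    then have "P \<in> (if N \<theta> = 1 then {Tpt} else {}) \<union> {fig_pt b | b. b \<noteq> 0 \<and> N b = -1 / N \<theta> \<and> N b \<noteq> 1}"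
      using vertices_eq[OF \<open>\<theta> \<noteq> 0\<close>] by (simp only:)
    then show "P \<in> insert Tpt {fig_pt b | b. b \<noteq> 0 \<and> N b \<noteq> 1}"
    proof (rule UnE)
      assume "P \<in> (if N \<theta> = 1 then {Tpt} else {})"
      then show ?thesis by (simp split: if_splits)
    qed blast
  next
    fix P assume "P \<in> insert Tpt {fig_pt b | b. b \<noteq> 0 \<and> N b \<noteq> 1}"
    then consider "P = Tpt" | b where "b \<noteq> 0" "N b \<noteq> 1" "P = fig_pt b" by blast
    then show "P \<in> (\<Union>\<theta>\<in>{\<theta> :: 'a. \<theta> \<noteq> 0}. vertices q \<theta>)"
    proof cases
      case 1
      then have "P \<in> vertices q 1" unfolding vertices_eq[OF one_neq_zero] by simp
      then show ?thesis by (intro UN_I[of 1]) simp_all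
    next
      case (2 b)
      have "-1 / N b \<in> N ` {x. x \<noteq> 0}"
        unfolding normq_image using 2(1) by (simp add: frob_divide frob_minus)
      then obtain \<theta> where \<theta>: "\<theta> \<noteq> 0" "N \<theta> = -1 / N b" by (auto elim!: imageE)
      then have "N b = -1 / N \<theta>" using 2(1) by (simp add: field_simps)
      then have "P \<in> {fig_pt b | b. b \<noteq> 0 \<and> N b = -1 / N \<theta> \<and> N b \<noteq> 1}"
        using 2 by (intro CollectI exI[of _ b]) simp
      then have "P \<in> vertices q \<theta>" unfolding vertices_eq[OF \<theta>(1)] by (rule UnI2)
      then show ?thesis using \<theta>(1) by (intro UN_I[of \<theta>]) simp_all
    qed
  qed
  finally show ?thesis .
qed

lemma card_all_vertices: "card (insert Tpt {fig_pt b | b. b \<noteq> 0 \<and> N b \<noteq> 1}) = q^3 - q^2 - q - 1"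
proof -
  have "{fig_pt b | b. b \<noteq> 0 \<and> N b \<noteq> 1} = fig_pt ` ({x. x \<noteq> 0} - {b. N b = 1})" by blast
  moreover have "inj_on fig_pt ({x. x \<noteq> 0} - {b. N b = 1})" by (simp add: inj_on_def fig_pt_eq_iff)
  moreover have "card ({x :: 'a. x \<noteq> 0} - {b. N b = 1}) = (q^3 - 1) - (q^2 + q + 1)"
    by (subst card_Diff_subset) (auto simp: card_nonzero card_normq_eq_1)
  ultimately have "card {fig_pt b | b. b \<noteq> 0 \<and> N b \<noteq> 1} = (q^3 - 1) - (q^2 + q + 1)"
    by (simp add: card_image)
  moreover have "Tpt \<notin> {fig_pt b | b. b \<noteq> 0 \<and> N b \<noteq> 1}" using fig_pt_ne_Tpt by blast
  moreover have "q^2 + q + 2 \<le> q^3"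
  proof -
    have "2 * q \<le> q * q" "2 * (q * q) \<le> q * (q * q)" using q_ge_2 by simp_all
    then show ?thesis unfolding power2_eq_square power3_eq_cube using q_ge_2 by linarith
  qed
  ultimately show ?thesis by (simp add: card_insert_if)
qed

lemma minus_one_eq_one_iff_even: "(-1 :: 'a) = 1 \<longleftrightarrow> even q"
proof -
  obtain k where k: "k > 0" "q = CHAR('a) ^ k" using q_eq_CHAR_power by blast
  have "(-1 :: 'a) = 1 \<longleftrightarrow> (1 :: 'a) + 1 = 0" using eq_neg_iff_add_eq_0[of "1 :: 'a" 1] by auto
  also have "\<dots> \<longleftrightarrow> of_nat 2 = (0 :: 'a)" by (simp only: one_add_one of_nat_numeral)
  also have "\<dots> \<longleftrightarrow> CHAR('a) dvd 2" by (rule of_nat_eq_0_iff_char_dvd)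
  also have "\<dots> \<longleftrightarrow> CHAR('a) = 2"
    using primes_dvd_imp_eq[OF prime_CHAR two_is_prime_nat] by auto
  also have "\<dots> \<longleftrightarrow> even CHAR('a)"
    using primes_dvd_imp_eq[OF two_is_prime_nat prime_CHAR] by auto
  also have "\<dots> \<longleftrightarrow> even q" using k by simp
  finally show ?thesis .
qed

lemma vertices_even:
  assumes "even q"
  shows "vertices q (1 :: 'a) = {Tpt} \<and> (\<forall>\<theta> :: 'a. \<theta> \<noteq> 0 \<and> N \<theta> \<noteq> 1 \<longrightarrow>
           vertices q \<theta> = Pi_set q \<theta> \<and> card (vertices q \<theta>) = q^2 + q + 1)"
proof (intro conjI allI impI)
  have m1: "(-1 :: 'a) = 1" using assms minus_one_eq_one_iff_even by simp
  have none: "{fig_pt b | b. b \<noteq> 0 \<and> N b = -1 / N 1 \<and> N b \<noteq> 1} = {}" using m1 by simp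
  show "vertices q (1 :: 'a) = {Tpt}" unfolding vertices_eq[OF one_neq_zero] none by simp
  fix \<theta> :: 'a assume \<theta>: "\<theta> \<noteq> 0 \<and> N \<theta> \<noteq> 1"
  moreover have "- \<theta> = \<theta>" using m1 by (metis mult_minus1 mult_1)
  ultimately have "vertices q \<theta> = Pi_set q \<theta>" using vertices_eq_Pi_set m1 by metis
  then show "vertices q \<theta> = Pi_set q \<theta>" "card (vertices q \<theta>) = q^2 + q + 1"
    using card_Pi_set \<theta> by simp_all
qed

lemma vertices_odd:
  assumes "odd q"
  shows "vertices q (-1 :: 'a) = {} \<and> vertices q (1 :: 'a) = insert Tpt (Pi_set q (-1))
    \<and> card (vertices q (1 :: 'a)) = q^2 + q + 2
    \<and> (\<forall>\<theta> :: 'a. \<theta> \<noteq> 0 \<and> N \<theta> \<noteq> 1 \<and> N \<theta> \<noteq> -1 \<longrightarrow>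
         vertices q \<theta> = Pi_set q (-\<theta>) \<and> card (vertices q \<theta>) = q^2 + q + 1)"
proof (intro conjI allI impI)
  have m1: "(-1 :: 'a) \<noteq> 1" using assms minus_one_eq_one_iff_even by simp
  have neg1: "(-1 :: 'a) \<noteq> 0" by simp
  have none: "{fig_pt b | b. b \<noteq> 0 \<and> N b = -1 / N (-1) \<and> N b \<noteq> 1} = {}" by (simp add: normq_minus)
  show "vertices q (-1 :: 'a) = {}" unfolding vertices_eq[OF neg1] none
    using m1 by (simp add: normq_minus)
  have "(b \<noteq> 0 \<and> N b = -1 / N 1 \<and> N b \<noteq> 1) \<longleftrightarrow> (b \<noteq> 0 \<and> N b = 1 / N (-1))" for b
    using m1 by (auto simp: normq_minus)
  then show V1: "vertices q (1 :: 'a) = insert Tpt (Pi_set q (-1))"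
    unfolding vertices_eq[OF one_neq_zero] Pi_set_eq[OF neg1] by simp
  show "card (vertices q (1 :: 'a)) = q^2 + q + 2"
    unfolding V1 using card_Pi_set[OF neg1] Tpt_notin_Pi_set[OF neg1] by simp
  fix \<theta> :: 'a assume "\<theta> \<noteq> 0 \<and> N \<theta> \<noteq> 1 \<and> N \<theta> \<noteq> -1"
  then show "vertices q \<theta> = Pi_set q (-\<theta>)" "card (vertices q \<theta>) = q^2 + q + 1"
    using vertices_eq_Pi_set card_Pi_set[of "- \<theta>"] by simp_all
qed

end

theorem lemma7p3:
  fixes q :: nat
  assumes "\<exists>p k. prime p \<and> k > 0 \<and> q = p ^ k"
    and "card (UNIV::('a::{field,finite}) set) = q ^ 3"
  shows "{P \<in> PG. P \<notin> subplane q \<and> \<not> inc P mT \<and>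
            (\<exists>\<theta>::'a. \<theta> \<noteq> 0 \<and> projection (subplane q) P = S_set q \<theta>)}
           = insert Tpt {P \<in> Fig q (Tpt::'a trip set). \<not> inc P mT}
       \<and> card {P \<in> PG. P \<notin> subplane q \<and> \<not> inc P mT \<and>
            (\<exists>\<theta>::'a. \<theta> \<noteq> 0 \<and> projection (subplane q) P = S_set q \<theta>)} = q^3 - q^2 - q - 1
       \<and> (even q \<longrightarrow>
            vertices q (1::'a) = {Tpt}
          \<and> (\<forall>\<theta>::'a. \<theta> \<noteq> 0 \<and> normq q \<theta> \<noteq> 1 \<longrightarrow>
               vertices q \<theta> = Pi_set q \<theta> \<and> card (vertices q \<theta>) = q^2 + q + 1))
       \<and> (odd q \<longrightarrow>
            vertices q (-1::'a) = {}
          \<and> vertices q (1::'a) = insert Tpt (Pi_set q (-1))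
          \<and> card (vertices q (1::'a)) = q^2 + q + 2
          \<and> (\<forall>\<theta>::'a. \<theta> \<noteq> 0 \<and> normq q \<theta> \<noteq> 1 \<and> normq q \<theta> \<noteq> -1 \<longrightarrow>
               vertices q \<theta> = Pi_set q (-\<theta>) \<and> card (vertices q \<theta>) = q^2 + q + 1))"
proof -
  interpret cubic_extension q
    by (rule cubic_extension.intro) (fact assms)+
  show ?thesis
    unfolding all_vertices_eq Fig_Tpt_off_mT card_all_vertices
    by (intro vertices_even vertices_odd conjI refl impI)
qed

end
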